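(* For every half-integer $h\ge\frac12$ and each sign, the complex $\Gamma_{\pm h}$ (see context), depending on $k=\begin{pmatrix}a&b\\c&d\end{pmatrix}\in\mathbb C^{2\times2}\cong\mathbb C^4$, has no homology if $Q=ad-bc\ne0$. If $Q(q)=0$ and $q\ne0$ then its homology $\mathfrak h_q^i$ at $q$ is isomorphic to $\mathbb C$ for $i=1,2$ and is zero for $i\ne1,2$, and every such $q$ is a regular homology point (with respect to $Q$).
   Context: Let $\epsilon=\begin{pmatrix}0&1\\-1&0\end{pmatrix}$, $k^+=k$, $k^-=k^T$. $\Gamma_{\pm h}$ is the complex $S^{2h}\mathbb C^2\to S^{2h-1}\mathbb C^2\otimes\mathbb C^2\to S^{2h-2}\mathbb C^2$ in homological degrees $1,2,3$ (the last term dropped when $h=\frac12$), with first map the linear map $z^{\otimes 2h}\mapsto z^{\otimes(2h-1)}\otimes(k^{\mp}\epsilon z)$ and second map the linear map $z^{\otimes(2h-1)}\otimes y\mapsto (z^T\epsilon k^{\pm}\epsilon y)\,z^{\otimes(2h-2)}$, for $z,y\in\mathbb C^2$. A point $q$ is a regular homology point if $Q(q)=0$, $q$ is a smooth point of $Q=0$, $\dim\mathfrak h_k=\dim\mathfrak h_q$ for all $k$ with $Q(k)=0$ near $q$ (Zariski), and there is $\xi\in T_q\mathbb C^4$ with $\dot Q\ne0$ such that the differential on $\mathfrak h_q$ induced by the derivative $\dot d$ of the differential along $\xi$ at $q$ is exact. *)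

theory Defs
  imports "HOL-Analysis.Analysis" "HOL-Library.Function_Algebras"
begin

type_synonym mat2 = "complex^2^2"
type_synonym tensor = "2 list \<Rightarrow> complex"

text \<open>Tensors in (C^2)^{\<otimes>m} are modelled as functions on index lists over the two-element
  type 2, vanishing on lists of the wrong length.\<close>

definition eps :: mat2 where
  "eps = (\<chi> i j. if i = 0 \<and> j = 1 then 1 else if i = 1 \<and> j = 0 then -1 else 0)"

text \<open>sign s: True means +, False means -.  kpm s k = k^{\<plusminus>}, kmp s k = k^{\<mp>}.\<close>
definition kpm :: "bool \<Rightarrow> mat2 \<Rightarrow> mat2" where
  "kpm s k = (if s then k else transpose k)"
definition kmp :: "bool \<Rightarrow> mat2 \<Rightarrow> mat2" where
  "kmp s k = (if s then transpose k else k)"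

definition tscale :: "complex \<Rightarrow> tensor \<Rightarrow> tensor" where
  "tscale c f = (\<lambda>l. c * f l)"

abbreviation tspan :: "tensor set \<Rightarrow> tensor set" where
  "tspan \<equiv> module.span tscale"
abbreviation tdim :: "tensor set \<Rightarrow> nat" where
  "tdim \<equiv> vector_space.dim tscale"

definition pure :: "nat \<Rightarrow> complex^2 \<Rightarrow> tensor" where
  "pure m z = (\<lambda>l. if length l = m then prod_list (map (\<lambda>x. z $ x) l) else 0)"

definition pure2 :: "nat \<Rightarrow> complex^2 \<Rightarrow> complex^2 \<Rightarrow> tensor" where
  "pure2 m z y = (\<lambda>l. if length l = m
       then prod_list (map (\<lambda>x. z $ x) (butlast l)) * y $ last l else 0)"

text \<open>The terms of Gamma_{\<plusminus>h}, n = 2h, in degrees 1,2,3 (zero elsewhere; degree 3 is zero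
  when n = 1).\<close>
definition Cterm :: "nat \<Rightarrow> int \<Rightarrow> tensor set" where
  "Cterm n i =
     (if i = 1 then tspan (range (pure n))
      else if i = 2 then tspan {pure2 n z y | z y. True}
      else if i = 3 \<and> n \<ge> 2 then tspan (range (pure (n - 2)))
      else {0})"

text \<open>First map: z^{\<otimes>n} \<mapsto> z^{\<otimes>(n-1)} \<otimes> (M z), M = k^{\<mp>} eps, as a contraction
  (its restriction to S^n is the linear map of the paper).\<close>
definition d1 :: "nat \<Rightarrow> mat2 \<Rightarrow> tensor \<Rightarrow> tensor" where
  "d1 n M T = (\<lambda>l. if length l = n then (\<Sum>b\<in>UNIV. M $ last l $ b * T (butlast l @ [b])) else 0)"

text \<open>Second map: z^{\<otimes>(n-1)} \<otimes> y \<mapsto> (z^T N y) z^{\<otimes>(n-2)}, N = eps k^{\<plusminus>} eps.\<close>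
definition d2 :: "nat \<Rightarrow> mat2 \<Rightarrow> tensor \<Rightarrow> tensor" where
  "d2 n N U = (\<lambda>l. if length l = n - 2
      then (\<Sum>c\<in>UNIV. \<Sum>a\<in>UNIV. N $ c $ a * U (l @ [c, a])) else 0)"

definition dmap :: "bool \<Rightarrow> nat \<Rightarrow> mat2 \<Rightarrow> int \<Rightarrow> tensor \<Rightarrow> tensor" where
  "dmap s n k i x =
     (if i = 1 then d1 n (kmp s k ** eps) x
      else if i = 2 \<and> n \<ge> 2 then d2 n (eps ** kpm s k ** eps) x
      else 0)"

definition hdim :: "bool \<Rightarrow> nat \<Rightarrow> mat2 \<Rightarrow> int \<Rightarrow> nat" where
  "hdim s n k i = tdim {x \<in> Cterm n i. dmap s n k i x = 0}
                  - tdim (dmap s n k (i - 1) ` Cterm n (i - 1))"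

definition mline :: "mat2 \<Rightarrow> complex \<Rightarrow> mat2 \<Rightarrow> mat2" where
  "mline q t \<xi> = (\<chi> a b. q $ a $ b + t * \<xi> $ a $ b)"

definition ddot :: "bool \<Rightarrow> nat \<Rightarrow> mat2 \<Rightarrow> mat2 \<Rightarrow> int \<Rightarrow> tensor \<Rightarrow> tensor" where
  "ddot s n q \<xi> i x = (\<lambda>l. deriv (\<lambda>t. dmap s n (mline q t \<xi>) i x l) 0)"

definition Qdot_nonzero :: "mat2 \<Rightarrow> mat2 \<Rightarrow> bool" where
  "Qdot_nonzero q \<xi> \<longleftrightarrow>
     (\<exists>D. ((\<lambda>t. det (mline q t \<xi>)) has_field_derivative D) (at 0) \<and> D \<noteq> 0)"

definition smooth_point :: "mat2 \<Rightarrow> bool" where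
  "smooth_point q \<longleftrightarrow> det q = 0 \<and> (\<exists>\<xi>. Qdot_nonzero q \<xi>)"

inductive_set polyfun :: "(mat2 \<Rightarrow> complex) set" where
  pf_const: "(\<lambda>k. c) \<in> polyfun"
| pf_coord: "(\<lambda>k. k $ i $ j) \<in> polyfun"
| pf_add: "p \<in> polyfun \<Longrightarrow> r \<in> polyfun \<Longrightarrow> (\<lambda>k. p k + r k) \<in> polyfun"
| pf_mult: "p \<in> polyfun \<Longrightarrow> r \<in> polyfun \<Longrightarrow> (\<lambda>k. p k * r k) \<in> polyfun"

definition zariski_open :: "mat2 set \<Rightarrow> bool" where
  "zariski_open U \<longleftrightarrow> (\<exists>P \<subseteq> polyfun. U = - {k. \<forall>p\<in>P. p k = 0})"

text \<open>the differential on h_q induced by \<dot>d is exact: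
  [x] \<in> h^i with [\<dot>d x] = 0 in h^{i+1} implies [x] = [\<dot>d y] for a cycle y\<close>
definition induced_exact :: "bool \<Rightarrow> nat \<Rightarrow> mat2 \<Rightarrow> mat2 \<Rightarrow> bool" where
  "induced_exact s n q \<xi> \<longleftrightarrow>
     (\<forall>i. \<forall>x \<in> Cterm n i.
        dmap s n q i x = 0 \<and> ddot s n q \<xi> i x \<in> dmap s n q i ` Cterm n i \<longrightarrow>
        (\<exists>y \<in> Cterm n (i - 1). \<exists>w \<in> Cterm n (i - 1).
           dmap s n q (i - 1) y = 0 \<and>
           x = (\<lambda>l. ddot s n q \<xi> (i - 1) y l + dmap s n q (i - 1) w l)))"

definition regular_homology_point :: "bool \<Rightarrow> nat \<Rightarrow> mat2 \<Rightarrow> bool" where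
  "regular_homology_point s n q \<longleftrightarrow>
     det q = 0 \<and> smooth_point q \<and>
     (\<exists>U. zariski_open U \<and> q \<in> U \<and>
        (\<forall>k \<in> U. det k = 0 \<longrightarrow> (\<forall>i. hdim s n k i = hdim s n q i))) \<and>
     (\<exists>\<xi>. Qdot_nonzero q \<xi> \<and> induced_exact s n q \<xi>)"

end

theory Submission
  imports Defs
begin

(*
  Write n = 2h and K = k^+ or k^-.  A tensor in S^m C^2 is determined by its values on index
  words with j ones (j = 0..m), and one in S^(m-1) C^2 (x) C^2 by the pairs (j, c).  In these
  coordinates both differentials are first-order difference operators with coefficients from K,
  the three terms have dimensions n + 1, 2n, n - 1, and d_2 is onto as soon as K is nonzero.
  If det K is nonzero, d_1 is injective and rank-nullity gives exactness.  If K = a b^T has rank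
  one, ker d_1 is spanned by a^(x)n, so the homology is C in degrees 1 and 2.

  For regularity take xi the complex conjugate of the cofactor matrix of q, so that det has
  derivative sum |q_ij|^2 > 0 along xi.  Polarizing d_2 d_1 = 0 shows that g, the derivative of
  d_1 applied to a^(x)n, is a 2-cycle, and the functional u |-> b_0 u(w,1) - b_1 u(w,0), which
  vanishes on im d_1, does not vanish on g.  So the derivative maps h^1 isomorphically onto h^2,
  which is the required exactness.  The Zariski neighbourhood is the complement of k = 0.
*)

section \<open>Finite-dimensional subspaces\<close>

context vector_space
begin

lemma span_inter_span_Diff_eq_0:
  assumes B: "independent B" and C: "C \<subseteq> B" and x: "x \<in> span C" "x \<in> span (B - C)"
  shows "x = 0"
proof -
  have "representation B x = representation C x"
    by (rule representation_extend[OF B x(1) C])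
  moreover have "representation B x = representation (B - C) x"
    by (rule representation_extend[OF B x(2)]) blast
  ultimately have "representation B x b = 0" for b
    using representation_ne_zero[of C x b] representation_ne_zero[of "B - C" x b] by auto
  moreover have "(\<Sum>b | representation B x b \<noteq> 0. scale (representation B x b) b) = x"
    using sum_nonzero_representation_eq[OF B] x(1) span_mono[OF C] by blast
  ultimately show ?thesis by simp
qed

lemma finite_basis_of_finite_span:
  assumes "finite B0" "V \<subseteq> span B0"
  obtains B where "finite B" "B \<subseteq> V" "independent B" "V \<subseteq> span B" "card B = dim V"
proof -
  obtain B where B: "B \<subseteq> V" "independent B" "V \<subseteq> span B" "card B = dim V"
    using basis_exists by blast
  moreover have "finite B"
    using independent_span_bound[OF assms(1) B(2)] B(1) assms(2) by blast
  ultimately show ?thesis using that by blast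
qed

lemma dim_insert_finite:
  assumes "finite B0" "A \<subseteq> span B0" "g \<notin> span A"
  shows "dim (insert g A) = dim A + 1"
proof -
  obtain B where B: "finite B" "B \<subseteq> A" "independent B" "A \<subseteq> span B" "card B = dim A"
    using finite_basis_of_finite_span[OF assms(1,2)] by blast
  have span_B: "span B = span A"
    using B(2,4) span_superset by (auto simp: span_eq)
  then have "g \<notin> span B" using assms(3) by simp
  moreover have "span (insert g B) = span (insert g A)"
    using span_B by (simp add: span_insert)
  ultimately have "dim (insert g A) = card (insert g B)"
    using dim_eq_card independent_insertI[OF _ B(3)] by blast
  moreover have "g \<notin> B"
    using \<open>g \<notin> span B\<close> span_superset by blast
  ultimately show ?thesis
    using B(1,5) by simp
qed

lemma subspace_eq_if_dim_eq:
  assumes "finite B0" "T \<subseteq> span B0" "subspace A" "A \<subseteq> T" "dim A = dim T"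
  shows "A = T"
proof -
  obtain BA where BA: "BA \<subseteq> A" "independent BA" "A \<subseteq> span BA" "card BA = dim A"
    using basis_exists by blast
  obtain BT where BT: "BA \<subseteq> BT" "BT \<subseteq> T" "independent BT" "T \<subseteq> span BT"
    using maximal_independent_subset_extend[OF subset_trans[OF BA(1) assms(4)] BA(2)] .
  have "finite BT"
    using independent_span_bound[OF assms(1) BT(3)] BT(2) assms(2) by blast
  moreover have "card BA = card BT"
    using basis_card_eq_dim[OF BT(2,4,3)] BA(4) assms(5) by simp
  ultimately have "BA = BT"
    by (rule card_subset_eq[OF _ BT(1)])
  then have "T \<subseteq> A"
    using BT(4) span_minimal[OF BA(1) assms(3)] by simp
  then show ?thesis
    using assms(4) by (rule subset_antisym[rotated])
qed

lemma dilated_sum_powers_diff: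
  "(\<Sum>i\<le>Suc m. scale ((2 * t) ^ i) (w i)) - scale (2 ^ Suc m) (\<Sum>i\<le>Suc m. scale (t ^ i) (w i)) =
    (\<Sum>i\<le>m. scale (t ^ i) (scale (2 ^ i - 2 ^ Suc m) (w i)))"
proof -
  have "(\<Sum>i\<le>Suc m. scale ((2 * t) ^ i) (w i)) - scale (2 ^ Suc m) (\<Sum>i\<le>Suc m. scale (t ^ i) (w i)) =
      (\<Sum>i\<le>Suc m. scale ((2 * t) ^ i - 2 ^ Suc m * t ^ i) (w i))"
    by (simp only: scale_sum_right scale_scale scale_left_diff_distrib sum_subtractf)
  also have "\<dots> = (\<Sum>i\<le>m. scale ((2 * t) ^ i - 2 ^ Suc m * t ^ i) (w i))"
    by (simp only: sum.atMost_Suc power_mult_distrib diff_self scale_zero_left add_0_right)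
  also have "\<dots> = (\<Sum>i\<le>m. scale (t ^ i) (scale (2 ^ i - 2 ^ Suc m) (w i)))"
    by (intro sum.cong refl) (simp add: scale_scale power_mult_distrib algebra_simps)
  finally show ?thesis .
qed

end

context vector_space_pair
begin

lemma inj_on_span_Diff_kernel_basis:
  assumes f: "Vector_Spaces.linear s1 s2 f" and B: "vs1.independent B" and BK: "BK \<subseteq> B"
    and ker: "\<And>x. x \<in> vs1.span B \<Longrightarrow> f x = 0 \<Longrightarrow> x \<in> vs1.span BK"
  shows "inj_on f (vs1.span (B - BK))"
proof -
  interpret f: Vector_Spaces.linear s1 s2 f by (rule f)
  show ?thesis
    unfolding f.inj_on_iff_eq_0[OF vs1.subspace_span]
  proof (intro ballI impI)
    fix x assume x: "x \<in> vs1.span (B - BK)" "f x = 0"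
    then have "x \<in> vs1.span BK"
      using ker vs1.span_mono[of "B - BK" B] by blast
    then show "x = 0"
      using vs1.span_inter_span_Diff_eq_0[OF B BK _ x(1)] by blast
  qed
qed

lemma image_span_subset_span_image_Diff:
  assumes f: "Vector_Spaces.linear s1 s2 f" and BK: "\<And>b. b \<in> BK \<Longrightarrow> f b = 0"
  shows "f ` vs1.span B \<subseteq> vs2.span (f ` (B - BK))"
proof -
  interpret f: Vector_Spaces.linear s1 s2 f by (rule f)
  have "f b \<in> vs2.span (f ` (B - BK))" if "b \<in> B" for b
    using BK that by (cases "b \<in> BK") (auto simp: vs2.span_zero intro: vs2.span_base)
  then have "f ` B \<subseteq> vs2.span (f ` (B - BK))" by blast
  then have "vs2.span (f ` B) \<subseteq> vs2.span (f ` (B - BK))"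
    by (rule vs2.span_minimal[OF _ vs2.subspace_span])
  then show ?thesis by (simp add: f.span_image)
qed

lemma dim_kernel_add_dim_image:
  assumes f: "Vector_Spaces.linear s1 s2 f" and S: "vs1.subspace S"
    and B0: "finite B0" "S \<subseteq> vs1.span B0"
  shows "vs1.dim {x\<in>S. f x = 0} + vs2.dim (f ` S) = vs1.dim S"
proof -
  interpret f: Vector_Spaces.linear s1 s2 f by (rule f)
  define K where "K = {x\<in>S. f x = 0}"
  obtain BK where BK: "BK \<subseteq> K" "vs1.independent BK" "K \<subseteq> vs1.span BK" "card BK = vs1.dim K"
    using vs1.basis_exists by blast
  obtain B where B: "BK \<subseteq> B" "B \<subseteq> S" "vs1.independent B" "S \<subseteq> vs1.span B"
    using vs1.maximal_independent_subset_extend[of BK S] BK by (auto simp: K_def)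
  have "finite B"
    using vs1.independent_span_bound[OF B0(1) B(3)] B(2) B0(2) by blast
  have "vs1.span B \<subseteq> S"
    using B(2) S by (rule vs1.span_minimal)
  define C where "C = B - BK"
  have inj: "inj_on f (vs1.span C)"
    unfolding C_def using \<open>vs1.span B \<subseteq> S\<close> BK(3)
    by (intro inj_on_span_Diff_kernel_basis[OF f B(3,1)]) (auto simp: K_def)
  have "f ` S \<subseteq> f ` vs1.span B" using B(4) by (rule image_mono)
  also have "\<dots> \<subseteq> vs2.span (f ` C)"
    unfolding C_def using BK(1) by (intro image_span_subset_span_image_Diff[OF f]) (auto simp: K_def)
  finally have "f ` S \<subseteq> vs2.span (f ` C)" .
  moreover have "f ` C \<subseteq> f ` S" using B(2) by (auto simp: C_def)
  moreover have "vs2.independent (f ` C)"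
    using f.independent_injective_image[OF _ inj] vs1.independent_mono[OF B(3)] by (auto simp: C_def)
  ultimately have "vs2.dim (f ` S) = card (f ` C)"
    by (intro vs2.basis_card_eq_dim[symmetric])
  also have "\<dots> = card C"
    using card_image inj_on_subset[OF inj vs1.span_superset] by blast
  also have "\<dots> = card B - card BK"
    unfolding C_def by (rule card_Diff_subset[OF finite_subset[OF B(1) \<open>finite B\<close>] B(1)])
  finally have "vs2.dim (f ` S) = card B - card BK" .
  moreover have "card BK \<le> card B"
    by (rule card_mono[OF \<open>finite B\<close> B(1)])
  moreover have "card B = vs1.dim S"
    by (rule vs1.basis_card_eq_dim[OF B(2,4,3)])
  ultimately show ?thesis
    using BK(4) unfolding K_def by linarith
qed

end

lemma power_of_2_neq_char_0:
  assumes "i < j"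
  shows "(2::'a::field_char_0) ^ i \<noteq> 2 ^ j"
proof -
  have "(2::nat) ^ i \<noteq> 2 ^ j"
    using power_strict_increasing[OF assms, of "2::nat"] by simp
  then have "(of_nat (2 ^ i) :: 'a) \<noteq> of_nat (2 ^ j)"
    by (simp only: of_nat_eq_iff not_False_eq_True)
  then show ?thesis by simp
qed

lemma polynomial_coeff_in_subspace:
  fixes scale :: "'a::field_char_0 \<Rightarrow> 'b::ab_group_add \<Rightarrow> 'b"
  assumes "vector_space scale" and S: "module.subspace scale S"
    and P: "\<And>t. (\<Sum>i\<le>m. scale (t ^ i) (w i)) \<in> S" and "i \<le> m"
  shows "w i \<in> S"
proof -
  interpret vector_space scale by fact
  show ?thesis using P \<open>i \<le> m\<close>
  proof (induction m arbitrary: w i)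
    case 0
    then show ?case using "0.prems"(1)[of 1] by simp
  next
    case (Suc m)
    let ?c = "\<lambda>i. 2 ^ i - 2 ^ Suc m :: 'a"
    have "(\<Sum>i\<le>m. scale (t ^ i) (scale (?c i) (w i))) \<in> S" for t
      unfolding dilated_sum_powers_diff[symmetric] using Suc.prems(1) S
      by (intro subspace_diff subspace_scale)
    then have c_in: "scale (?c i) (w i) \<in> S" if "i \<le> m" for i
      using Suc.IH[of "\<lambda>i. scale (?c i) (w i)"] that by blast
    have c_nz: "?c i \<noteq> 0" if "i \<le> m" for i
      using power_of_2_neq_char_0[of i "Suc m"] that by simp
    have low: "w i \<in> S" if "i \<le> m" for i
    proof -
      have "scale (inverse (?c i)) (scale (?c i) (w i)) \<in> S"
        by (rule subspace_scale[OF S c_in[OF that]])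
      then show ?thesis
        using c_nz[OF that] by (simp add: scale_scale)
    qed
    show ?case
    proof (cases "i \<le> m")
      case False
      then have "i = Suc m" using Suc.prems(2) by simp
      then have "w i = (\<Sum>i\<le>Suc m. scale (1 ^ i) (w i)) - (\<Sum>i\<le>m. w i)"
        by simp
      also have "\<dots> \<in> S"
        by (rule subspace_diff[OF S Suc.prems(1)[of 1]]) (use low S in \<open>auto intro: subspace_sum\<close>)
      finally show ?thesis .
    qed (use low in blast)
  qed
qed

section \<open>Coordinates on symmetric tensors\<close>

(* Defs indexes the type 2 by 0 and 1, whereas the library uses 1 and 2 (= 0). *)
lemma UNIV_2_eq_0_1: "(UNIV :: 2 set) = {0, 1}"
proof -
  have two: "(2::2) = 0" by simp
  show ?thesis using UNIV_2 by (simp add: two insert_commute)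
qed

lemma exhaust_2_0_1: "(x::2) = 0 \<or> x = 1"
  using UNIV_2_eq_0_1 by auto

lemma all_2_iff: "(\<forall>i::2. P i) \<longleftrightarrow> P 0 \<and> P 1"
  by (metis exhaust_2_0_1)

lemma sum_UNIV_2_eq: "sum f (UNIV :: 2 set) = f 0 + f 1"
  by (simp add: UNIV_2_eq_0_1)

lemma vec2_eq_0_iff: "(p::complex^2) = 0 \<longleftrightarrow> p$0 = 0 \<and> p$1 = 0"
  by (simp add: vec_eq_iff all_2_iff)

lemma mat2_eq_0_iff: "(K::mat2) = 0 \<longleftrightarrow> K$0$0 = 0 \<and> K$0$1 = 0 \<and> K$1$0 = 0 \<and> K$1$1 = 0"
  by (simp add: vec_eq_iff all_2_iff)

lemma mat2_eqI: "(\<And>i j. K$i$j = L$i$j) \<Longrightarrow> (K::mat2) = L"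
  by (simp add: vec_eq_iff)

lemma det_mat2: "det (K::mat2) = K$0$0 * K$1$1 - K$0$1 * K$1$0"
proof -
  have two: "(2::2) = 0" by simp
  show ?thesis by (simp add: det_2 two algebra_simps)
qed

lemma vector_space_tscale: "vector_space tscale"
  by unfold_locales (auto simp: tscale_def fun_eq_iff algebra_simps)

interpretation tensor: vector_space tscale
  by (rule vector_space_tscale)

lemma sum_fun_apply: "(\<Sum>x\<in>A. f x) l = (\<Sum>x\<in>A. f x l)"
  by (induction A rule: infinite_finite_induct) auto

lemma sum_tscale_apply: "(\<Sum>x\<in>A. tscale (c x) (f x)) l = (\<Sum>x\<in>A. c x * f x l)"
  by (simp add: sum_fun_apply tscale_def)

locale tensor_coords =
  fixes \<Phi> :: "('i \<Rightarrow> complex) \<Rightarrow> tensor" and I :: "'i set" and wit :: "'i \<Rightarrow> 2 list"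
  assumes finite_I: "finite I"
    and expand: "\<Phi> u = (\<Sum>i\<in>I. tscale (u i) (\<Phi> (indicator {i})))"
    and unit_wit: "i \<in> I \<Longrightarrow> j \<in> I \<Longrightarrow> \<Phi> (indicator {i}) (wit j) = (if i = j then 1 else 0)"
begin

lemma apply_wit: "j \<in> I \<Longrightarrow> \<Phi> u (wit j) = u j"
  by (subst expand) (simp add: sum_tscale_apply unit_wit finite_I if_distrib cong: if_cong)

lemma eq_iff: "\<Phi> u = \<Phi> v \<longleftrightarrow> (\<forall>j\<in>I. u j = v j)"
proof
  show "\<Phi> u = \<Phi> v \<Longrightarrow> \<forall>j\<in>I. u j = v j"
    by (metis apply_wit)
  show "\<forall>j\<in>I. u j = v j \<Longrightarrow> \<Phi> u = \<Phi> v"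
    by (subst (1 2) expand) simp
qed

lemma zero: "\<Phi> (\<lambda>i. 0) = 0"
  by (subst expand) simp

lemma eq_0_iff: "\<Phi> u = 0 \<longleftrightarrow> (\<forall>j\<in>I. u j = 0)"
  using eq_iff[of u "\<lambda>i. 0"] by (simp add: zero)

lemma add: "\<Phi> u + \<Phi> v = \<Phi> (\<lambda>i. u i + v i)"
  by (subst (1 2 3) expand) (simp add: tensor.scale_left_distrib sum.distrib)

lemma scale: "tscale c (\<Phi> u) = \<Phi> (\<lambda>i. c * u i)"
  by (subst (1 2) expand) (simp add: tensor.scale_sum_right)

lemma subspace_range: "tensor.subspace (range \<Phi>)"
  unfolding tensor.subspace_def
proof (intro conjI ballI allI)
  show "0 \<in> range \<Phi>"
    using zero by (metis rangeI)
  show "x + y \<in> range \<Phi>" if "x \<in> range \<Phi>" "y \<in> range \<Phi>" for x y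
    using that by (auto simp: add)
  show "tscale c x \<in> range \<Phi>" if "x \<in> range \<Phi>" for c x
    using that by (auto simp: scale)
qed

lemma range_eq_span: "range \<Phi> = tspan ((\<lambda>i. \<Phi> (indicator {i})) ` I)"
proof
  show "range \<Phi> \<subseteq> tspan ((\<lambda>i. \<Phi> (indicator {i})) ` I)"
  proof
    fix x assume "x \<in> range \<Phi>"
    then obtain u where "x = (\<Sum>i\<in>I. tscale (u i) (\<Phi> (indicator {i})))"
      using expand by blast
    then show "x \<in> tspan ((\<lambda>i. \<Phi> (indicator {i})) ` I)"
      by (auto intro!: tensor.span_sum tensor.span_scale intro: tensor.span_base)
  qed
  show "tspan ((\<lambda>i. \<Phi> (indicator {i})) ` I) \<subseteq> range \<Phi>"
    by (rule tensor.span_minimal[OF _ subspace_range]) auto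
qed

lemma dim_range: "tdim (range \<Phi>) = card I"
proof -
  have inj: "inj_on (\<lambda>i. \<Phi> (indicator {i})) I"
  proof (rule inj_onI)
    fix i j assume ij: "i \<in> I" "j \<in> I" and "\<Phi> (indicator {i}) = \<Phi> (indicator {j})"
    then have "\<Phi> (indicator {i}) (wit j) = \<Phi> (indicator {j}) (wit j)" by simp
    then show "i = j" using unit_wit[OF ij] unit_wit[OF ij(2,2)] by (simp split: if_splits)
  qed
  have "tensor.independent ((\<lambda>i. \<Phi> (indicator {i})) ` I)"
  proof (rule tensor.independent_if_scalars_zero)
    fix f x
    assume sum0: "(\<Sum>x\<in>(\<lambda>i. \<Phi> (indicator {i})) ` I. tscale (f x) x) = 0"
      and "x \<in> (\<lambda>i. \<Phi> (indicator {i})) ` I"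
    then obtain j where j: "j \<in> I" "x = \<Phi> (indicator {j})" by blast
    have "0 = (\<Sum>x\<in>(\<lambda>i. \<Phi> (indicator {i})) ` I. tscale (f x) x) (wit j)"
      using sum0 by simp
    also have "\<dots> = (\<Sum>i\<in>I. f (\<Phi> (indicator {i})) * \<Phi> (indicator {i}) (wit j))"
      by (simp add: sum.reindex[OF inj] sum_tscale_apply)
    also have "\<dots> = (\<Sum>i\<in>I. if i = j then f (\<Phi> (indicator {i})) else 0)"
      by (rule sum.cong) (simp_all add: unit_wit j(1))
    also have "\<dots> = f x"
      using j finite_I by simp
    finally show "f x = 0" by simp
  qed (simp add: finite_I)
  then show ?thesis
    unfolding range_eq_span tensor.dim_span
    by (simp add: tensor.dim_eq_card_independent card_image[OF inj])
qed

end

definition count_ones :: "2 list \<Rightarrow> nat" where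
  "count_ones l = length (filter (\<lambda>x. x = 1) l)"

definition ones_word :: "nat \<Rightarrow> nat \<Rightarrow> 2 list" where
  "ones_word m j = replicate j 1 @ replicate (m - j) 0"

lemma count_ones_simps [simp]:
  "count_ones [] = 0" "count_ones (x # xs) = of_bool (x = 1) + count_ones xs"
  "count_ones (xs @ ys) = count_ones xs + count_ones ys"
  "count_ones (replicate j 1) = j" "count_ones (replicate j 0) = 0"
  by (simp_all add: count_ones_def filter_replicate)

lemma count_ones_le_length: "count_ones l \<le> length l"
  by (simp add: count_ones_def)

lemma length_ones_word [simp]: "j \<le> m \<Longrightarrow> length (ones_word m j) = m"
  by (simp add: ones_word_def)

lemma count_ones_ones_word [simp]: "count_ones (ones_word m j) = j"
  by (simp add: ones_word_def)

(* Models of S^m C^2 and of S^(m-1) C^2 (x) C^2: a symmetric tensor only depends on how many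
   of its indices are 1. *)
definition sym_tensor :: "nat \<Rightarrow> (nat \<Rightarrow> complex) \<Rightarrow> tensor" where
  "sym_tensor m t = (\<lambda>l. if length l = m then t (count_ones l) else 0)"

definition sym_butlast_tensor :: "nat \<Rightarrow> (nat \<times> 2 \<Rightarrow> complex) \<Rightarrow> tensor" where
  "sym_butlast_tensor m u = (\<lambda>l. if length l = m then u (count_ones (butlast l), last l) else 0)"

lemma tensor_coords_sym_tensor: "tensor_coords (sym_tensor m) {..m} (ones_word m)"
proof
  show "sym_tensor m t = (\<Sum>i\<le>m. tscale (t i) (sym_tensor m (indicator {i})))" for t
    using count_ones_le_length
    by (auto simp: fun_eq_iff sum_tscale_apply sym_tensor_def indicator_def if_distrib cong: if_cong)
qed (auto simp: sym_tensor_def)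

lemma tensor_coords_sym_butlast_tensor:
  assumes "1 \<le> m"
  shows "tensor_coords (sym_butlast_tensor m) ({..m - 1} \<times> UNIV) (\<lambda>(j, c). ones_word (m - 1) j @ [c])"
proof
  show "sym_butlast_tensor m u =
      (\<Sum>i\<in>{..m - 1} \<times> UNIV. tscale (u i) (sym_butlast_tensor m (indicator {i})))" for u
  proof
    fix l
    have "length l = m \<Longrightarrow> (count_ones (butlast l), last l) \<in> {..m - 1} \<times> UNIV"
      using count_ones_le_length[of "butlast l"] by simp
    then show "sym_butlast_tensor m u l =
        (\<Sum>i\<in>{..m - 1} \<times> UNIV. tscale (u i) (sym_butlast_tensor m (indicator {i}))) l"
      by (auto simp: sum_tscale_apply sym_butlast_tensor_def indicator_def if_distrib cong: if_cong)
  qed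
qed (use assms in \<open>auto simp: sym_butlast_tensor_def indicator_def\<close>)

definition pure_coords :: "complex^2 \<Rightarrow> nat \<Rightarrow> nat \<Rightarrow> complex" where
  "pure_coords z m j = z $ 1 ^ j * z $ 0 ^ (m - j)"

lemma prod_list_components:
  "prod_list (map (\<lambda>x. z $ x) l) = pure_coords z (length l) (count_ones l)"
proof (induction l)
  case (Cons x l)
  have "count_ones l \<le> length l" by (rule count_ones_le_length)
  then show ?case
    using Cons exhaust_2_0_1[of x]
    by (auto simp: pure_coords_def Suc_diff_le ac_simps)
qed (simp add: pure_coords_def)

lemma pure_eq_sym_tensor: "pure m z = sym_tensor m (pure_coords z m)"
  by (auto simp: pure_def sym_tensor_def fun_eq_iff prod_list_components)

lemma pure2_eq_sym_butlast_tensor: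
  "1 \<le> n \<Longrightarrow> pure2 n z y = sym_butlast_tensor n (\<lambda>(j, c). pure_coords z (n - 1) j * y $ c)"
  by (auto simp: pure2_def sym_butlast_tensor_def fun_eq_iff prod_list_components)

lemma span_pure: "tspan (range (pure m)) = range (sym_tensor m)"
proof
  interpret S: tensor_coords "sym_tensor m" "{..m}" "ones_word m"
    by (rule tensor_coords_sym_tensor)
  show "tspan (range (pure m)) \<subseteq> range (sym_tensor m)"
    by (rule tensor.span_minimal[OF _ S.subspace_range]) (auto simp: pure_eq_sym_tensor)
  have "sym_tensor m (indicator {j}) \<in> tspan (range (pure m))" if "j \<le> m" for j
  proof (rule polynomial_coeff_in_subspace[OF vector_space_tscale tensor.subspace_span _ that])
    fix c :: complex
    have "(\<Sum>i\<le>m. tscale (c ^ i) (sym_tensor m (indicator {i}))) = sym_tensor m (\<lambda>i. c ^ i)"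
      by (rule S.expand[symmetric])
    also have "\<dots> = pure m (\<chi> i. if i = 1 then c else 1)"
      unfolding pure_eq_sym_tensor by (rule arg_cong[where f = "sym_tensor m"]) (simp add: fun_eq_iff pure_coords_def)
    finally show "(\<Sum>i\<le>m. tscale (c ^ i) (sym_tensor m (indicator {i}))) \<in> tspan (range (pure m))"
      by (simp add: tensor.span_base)
  qed
  then show "range (sym_tensor m) \<subseteq> tspan (range (pure m))"
    unfolding S.range_eq_span by (intro tensor.span_minimal[OF _ tensor.subspace_span]) auto
qed

lemma span_pure2:
  assumes n: "1 \<le> n"
  shows "tspan {pure2 n z y | z y. True} = range (sym_butlast_tensor n)"
proof
  interpret S: tensor_coords "sym_butlast_tensor n" "{..n - 1} \<times> UNIV" "\<lambda>(j, c). ones_word (n - 1) j @ [c]"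
    by (rule tensor_coords_sym_butlast_tensor[OF n])
  show "tspan {pure2 n z y | z y. True} \<subseteq> range (sym_butlast_tensor n)"
    by (rule tensor.span_minimal[OF _ S.subspace_range]) (auto simp: pure2_eq_sym_butlast_tensor[OF n])
  have "sym_butlast_tensor n (indicator {(j, c)}) \<in> tspan {pure2 n z y | z y. True}"
    if "j \<le> n - 1" for j c
  proof (rule polynomial_coeff_in_subspace[OF vector_space_tscale tensor.subspace_span _ that])
    fix a :: complex
    have "(\<Sum>i\<le>n - 1. tscale (a ^ i) (sym_butlast_tensor n (indicator {(i, c)}))) =
        sym_butlast_tensor n (\<lambda>(i, d). if d = c then a ^ i else 0)"
      by (simp only: S.expand[of "\<lambda>(i, d). if d = c then a ^ i else 0"])
        (simp add: sum.cartesian_product' if_distrib[of "\<lambda>x. tscale x _"] cong: if_cong)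
    also have "\<dots> = pure2 n (\<chi> i. if i = 1 then a else 1) (\<chi> i. if i = c then 1 else 0)"
      unfolding pure2_eq_sym_butlast_tensor[OF n]
      by (rule arg_cong[where f = "sym_butlast_tensor n"]) (simp add: fun_eq_iff pure_coords_def)
    finally show "(\<Sum>i\<le>n - 1. tscale (a ^ i) (sym_butlast_tensor n (indicator {(i, c)})))
        \<in> tspan {pure2 n z y | z y. True}"
      by (auto intro: tensor.span_base)
  qed
  then show "range (sym_butlast_tensor n) \<subseteq> tspan {pure2 n z y | z y. True}"
    unfolding S.range_eq_span by (intro tensor.span_minimal[OF _ tensor.subspace_span]) auto
qed

lemma Cterm_1: "Cterm n 1 = range (sym_tensor n)"
  by (simp add: Cterm_def span_pure)

lemma Cterm_2: "1 \<le> n \<Longrightarrow> Cterm n 2 = range (sym_butlast_tensor n)"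
  using span_pure2[of n] by (simp add: Cterm_def)

lemma Cterm_3: "2 \<le> n \<Longrightarrow> Cterm n 3 = range (sym_tensor (n - 2))"
  by (simp add: Cterm_def span_pure)

lemma Cterm_other: "i \<noteq> 1 \<Longrightarrow> i \<noteq> 2 \<Longrightarrow> \<not> (i = 3 \<and> 2 \<le> n) \<Longrightarrow> Cterm n i = {0}"
  by (auto simp: Cterm_def)

lemma zero_in_Cterm: "0 \<in> Cterm n i"
  by (simp add: Cterm_def tensor.span_zero)

section \<open>The differentials in coordinates\<close>

lemma det_kpm: "det (kpm s k) = det k"
  by (simp add: kpm_def det_transpose)

lemma kpm_eq_0_iff: "kpm s k = 0 \<longleftrightarrow> k = 0"
  by (auto simp: kpm_def transpose_def vec_eq_iff)

lemma kmp_mult_eps_entries: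
  "(kmp s k ** eps)$x$0 = - kpm s k $1$x" "(kmp s k ** eps)$x$1 = kpm s k $0$x"
  by (simp_all add: kmp_def kpm_def transpose_transpose matrix_matrix_mult_def transpose_def
      eps_def sum_UNIV_2_eq)

lemma eps_kpm_eps_entries:
  "(eps ** kpm s k ** eps)$0$0 = - kpm s k $1$1" "(eps ** kpm s k ** eps)$0$1 = kpm s k $1$0"
  "(eps ** kpm s k ** eps)$1$0 = kpm s k $0$1" "(eps ** kpm s k ** eps)$1$1 = - kpm s k $0$0"
  by (simp_all add: matrix_matrix_mult_def eps_def sum_UNIV_2_eq)

definition d1_coords :: "mat2 \<Rightarrow> (nat \<Rightarrow> complex) \<Rightarrow> nat \<times> 2 \<Rightarrow> complex" where
  "d1_coords K t = (\<lambda>(w, x). K$0$x * t (Suc w) - K$1$x * t w)"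

definition d2_coords :: "mat2 \<Rightarrow> (nat \<times> 2 \<Rightarrow> complex) \<Rightarrow> nat \<Rightarrow> complex" where
  "d2_coords K u v = K$1$0 * u (v, 1) - K$1$1 * u (v, 0) + K$0$1 * u (Suc v, 0) - K$0$0 * u (Suc v, 1)"

lemma dmap_1_sym_tensor:
  "1 \<le> n \<Longrightarrow> dmap s n k 1 (sym_tensor n t) = sym_butlast_tensor n (d1_coords (kpm s k) t)"
  by (auto simp: dmap_def d1_def sym_tensor_def sym_butlast_tensor_def d1_coords_def fun_eq_iff
      sum_UNIV_2_eq kmp_mult_eps_entries)

lemma dmap_2_sym_butlast_tensor:
  "2 \<le> n \<Longrightarrow> dmap s n k 2 (sym_butlast_tensor n u) = sym_tensor (n - 2) (d2_coords (kpm s k) u)"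
  by (auto simp: dmap_def d2_def sym_tensor_def sym_butlast_tensor_def d2_coords_def fun_eq_iff
      sum_UNIV_2_eq eps_kpm_eps_entries butlast_append)

lemma dmap_1_in_Cterm_2: "1 \<le> n \<Longrightarrow> x \<in> Cterm n 1 \<Longrightarrow> dmap s n k 1 x \<in> Cterm n 2"
  by (auto simp: Cterm_1 Cterm_2 dmap_1_sym_tensor)

lemma dmap_other: "i \<noteq> 1 \<Longrightarrow> \<not> (i = 2 \<and> 2 \<le> n) \<Longrightarrow> dmap s n k i x = 0"
  by (auto simp: dmap_def)

lemma linear_dmap: "Vector_Spaces.linear tscale tscale (dmap s n k i)"
  unfolding Vector_Spaces.linear_iff
  by (auto simp: vector_space_tscale dmap_def d1_def d2_def fun_eq_iff tscale_def sum.distrib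
      algebra_simps sum_distrib_left)

lemma dmap_zero: "dmap s n k i 0 = 0"
  by (simp add: dmap_def d1_def d2_def fun_eq_iff)

lemma kpm_mline: "kpm s (mline q t \<xi>) $ i $ j = kpm s q $ i $ j + t * kpm s \<xi> $ i $ j"
  by (simp add: kpm_def mline_def transpose_def)

lemma dmap_mline: "dmap s n (mline q t \<xi>) i x l = dmap s n q i x l + t * dmap s n \<xi> i x l"
  by (simp add: dmap_def d1_def d2_def sum_UNIV_2_eq kmp_mult_eps_entries eps_kpm_eps_entries
      kpm_mline algebra_simps)

lemma ddot_eq_dmap: "ddot s n q \<xi> i x = dmap s n \<xi> i x"
proof
  fix l
  have "((\<lambda>t. dmap s n q i x l + t * dmap s n \<xi> i x l) has_field_derivative dmap s n \<xi> i x l) (at 0)"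
    by (auto intro!: derivative_eq_intros)
  then show "ddot s n q \<xi> i x l = dmap s n \<xi> i x l"
    unfolding ddot_def dmap_mline by (rule DERIV_imp_deriv)
qed

lemma d2_coords_d1_coords_polar: "d2_coords K (d1_coords L t) v + d2_coords L (d1_coords K t) v = 0"
  by (simp add: d1_coords_def d2_coords_def algebra_simps)

lemma dmap_2_dmap_1_polar:
  assumes "x \<in> Cterm n 1"
  shows "dmap s n k 2 (dmap s n l 1 x) + dmap s n l 2 (dmap s n k 1 x) = 0"
proof (cases "2 \<le> n")
  case True
  interpret S: tensor_coords "sym_tensor (n - 2)" "{..n - 2}" "ones_word (n - 2)"
    by (rule tensor_coords_sym_tensor)
  obtain t where "x = sym_tensor n t" using assms by (auto simp: Cterm_1)
  then show ?thesis
    using True by (simp add: dmap_1_sym_tensor dmap_2_sym_butlast_tensor S.add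
        d2_coords_d1_coords_polar S.zero)
qed (simp add: dmap_other)

lemma dmap_2_dmap_1: "x \<in> Cterm n 1 \<Longrightarrow> dmap s n k 2 (dmap s n k 1 x) = 0"
  using dmap_2_dmap_1_polar[of x n s k k] by (simp add: fun_eq_iff)

section \<open>Homology\<close>

definition cycles :: "bool \<Rightarrow> nat \<Rightarrow> mat2 \<Rightarrow> int \<Rightarrow> tensor set" where
  "cycles s n k i = {x \<in> Cterm n i. dmap s n k i x = 0}"

definition boundaries :: "bool \<Rightarrow> nat \<Rightarrow> mat2 \<Rightarrow> int \<Rightarrow> tensor set" where
  "boundaries s n k i = dmap s n k (i - 1) ` Cterm n (i - 1)"

lemma hdim_eq: "hdim s n k i = tdim (cycles s n k i) - tdim (boundaries s n k i)"
  by (simp add: hdim_def cycles_def boundaries_def)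

lemma subspace_Cterm: "tensor.subspace (Cterm n i)"
  by (simp add: Cterm_def tensor.subspace_span tensor.subspace_single_0)

lemma subspace_cycles: "tensor.subspace (cycles s n k i)"
proof -
  interpret d: Vector_Spaces.linear tscale tscale "dmap s n k i" by (rule linear_dmap)
  have "cycles s n k i = Cterm n i \<inter> {x. dmap s n k i x = 0}"
    by (auto simp: cycles_def)
  then show ?thesis
    using tensor.subspace_inter[OF subspace_Cterm d.subspace_kernel] by simp
qed

lemma subspace_boundaries: "tensor.subspace (boundaries s n k i)"
proof -
  interpret d: Vector_Spaces.linear tscale tscale "dmap s n k (i - 1)" by (rule linear_dmap)
  show ?thesis
    unfolding boundaries_def by (rule d.subspace_image[OF subspace_Cterm])
qed

lemma boundaries_2_subset_cycles_2:
  assumes "1 \<le> n"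
  shows "boundaries s n k 2 \<subseteq> cycles s n k 2"
proof
  fix y assume "y \<in> boundaries s n k 2"
  then obtain x where x: "x \<in> Cterm n 1" "y = dmap s n k 1 x"
    by (auto simp: boundaries_def)
  then have "y \<in> Cterm n 2"
    using assms by (simp add: dmap_1_in_Cterm_2)
  then show "y \<in> cycles s n k 2"
    using x dmap_2_dmap_1 by (simp add: cycles_def)
qed

definition outer :: "complex^2 \<Rightarrow> complex^2 \<Rightarrow> mat2" where
  "outer p q = (\<chi> i j. p$i * q$j)"

lemma outer_nth [simp]: "outer p q $ i $ j = p$i * q$j"
  by (simp add: outer_def)

lemma outer_eq_0_iff: "outer p q = 0 \<longleftrightarrow> p = 0 \<or> q = 0"
  by (auto simp: mat2_eq_0_iff vec2_eq_0_iff)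

lemma rank_one_factorization:
  assumes det: "det K = 0" and K: "K \<noteq> 0"
  obtains p q where "p \<noteq> 0" "q \<noteq> 0" "K = outer p q"
proof (cases "K$0 = 0")
  case True
  let ?p = "(\<chi> i. if i = 0 then 0 else 1) :: complex^2"
  have "?p \<noteq> 0" "K$1 \<noteq> 0"
    using True K by (simp_all add: vec2_eq_0_iff mat2_eq_0_iff)
  moreover have "K$i$j = outer ?p (K$1) $i$j" for i j
    using True exhaust_2_0_1[of i] by auto
  then have "K = outer ?p (K$1)"
    by (rule mat2_eqI)
  ultimately show ?thesis by (rule that)
next
  case False
  define r where "r = (if K$0$0 \<noteq> 0 then K$1$0 / K$0$0 else K$1$1 / K$0$1)"
  let ?p = "(\<chi> i. if i = 0 then 1 else r) :: complex^2"
  have det0: "K$0$0 * K$1$1 = K$0$1 * K$1$0" using det by (simp add: det_mat2)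
  have row_1: "K$1$0 = r * K$0$0 \<and> K$1$1 = r * K$0$1"
  proof (cases "K$0$0 = 0")
    case zero: True
    then have "K$0$1 \<noteq> 0" using False by (simp add: vec2_eq_0_iff)
    moreover have "K$1$0 = 0" using det0 zero \<open>K$0$1 \<noteq> 0\<close> by simp
    ultimately show ?thesis using zero by (simp add: r_def)
  next
    case nonzero: False
    then show ?thesis using det0 by (simp add: r_def field_simps)
  qed
  have "K$i$j = outer ?p (K$0) $i$j" for i j
    using row_1 exhaust_2_0_1[of i] exhaust_2_0_1[of j] by auto
  then have "K = outer ?p (K$0)"
    by (rule mat2_eqI)
  moreover have "?p \<noteq> 0" by (simp add: vec2_eq_0_iff)
  ultimately show ?thesis using False that by blast
qed

lemma kpm_rank_one:
  assumes "det k = 0" and "k \<noteq> 0"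
  obtains p q where "p \<noteq> 0" "q \<noteq> 0" "kpm s k = outer p q"
  by (rule rank_one_factorization[of "kpm s k"]) (use assms that in \<open>simp_all add: det_kpm kpm_eq_0_iff\<close>)

lemma d1_coords_outer: "d1_coords (outer p q) t (w, x) = q$x * (p$0 * t (Suc w) - p$1 * t w)"
  by (simp add: d1_coords_def algebra_simps)

lemma pure_coords_recurrence:
  assumes "w < m"
  shows "p$0 * pure_coords p m (Suc w) = p$1 * pure_coords p m w"
proof -
  have "m - w = Suc (m - Suc w)" using assms by simp
  then show ?thesis by (simp add: pure_coords_def)
qed

lemma recurrence_solution:
  assumes p: "p \<noteq> 0" and rec: "\<And>w. w < m \<Longrightarrow> p$0 * t (Suc w) = p$1 * t w"
  shows "\<exists>c. \<forall>j\<le>m. t j = c * pure_coords p m j"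
proof (cases "p$0 = 0")
  case True
  then have "p$1 \<noteq> 0" using p by (simp add: vec2_eq_0_iff)
  then have "t w = 0" if "w < m" for w
    using rec[OF that] True by simp
  then have "t j = t m / p$1 ^ m * pure_coords p m j" if "j \<le> m" for j
    using that True \<open>p$1 \<noteq> 0\<close> by (cases "j = m") (auto simp: pure_coords_def)
  then show ?thesis by blast
next
  case False
  have "t j = t 0 * (p$1 / p$0) ^ j" if "j \<le> m" for j
    using that
  proof (induction j)
    case (Suc j)
    then have "t (Suc j) = p$1 / p$0 * t j" using rec[of j] False by (simp add: field_simps)
    then show ?case using Suc by (simp add: ac_simps)
  qed simp
  then have "t j = t 0 / p$0 ^ m * pure_coords p m j" if "j \<le> m" for j
    using that False by (simp add: pure_coords_def power_divide power_diff field_simps)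
  then show ?thesis by blast
qed

lemma pure_coords_ne_0:
  assumes "a \<noteq> 0"
  shows "\<exists>j\<le>m. pure_coords a m j \<noteq> 0"
proof (cases "a$0 = 0")
  case True
  then have "a$1 \<noteq> 0" using assms by (simp add: vec2_eq_0_iff)
  then have "pure_coords a m m \<noteq> 0" by (simp add: pure_coords_def)
  then show ?thesis by blast
next
  case False
  then have "pure_coords a m 0 \<noteq> 0" by (simp add: pure_coords_def)
  then show ?thesis by blast
qed

lemma pure_ne_0: "p \<noteq> 0 \<Longrightarrow> pure m p \<noteq> 0"
  using pure_coords_ne_0[of p m] tensor_coords.eq_0_iff[OF tensor_coords_sym_tensor]
  by (auto simp: pure_eq_sym_tensor)

lemma sym_tensor_in_cycles_1:
  assumes "1 \<le> n"
  shows "sym_tensor n t \<in> cycles s n k 1 \<longleftrightarrow> (\<forall>w<n. \<forall>x. d1_coords (kpm s k) t (w, x) = 0)"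
proof -
  interpret S: tensor_coords "sym_butlast_tensor n" "{..n - 1} \<times> UNIV" "\<lambda>(j, c). ones_word (n - 1) j @ [c]"
    by (rule tensor_coords_sym_butlast_tensor[OF assms])
  show ?thesis
    using assms by (auto simp: cycles_def Cterm_1 dmap_1_sym_tensor S.eq_0_iff)
qed

lemma cycles_1_det_ne_0:
  assumes n: "1 \<le> n" and det: "det k \<noteq> 0"
  shows "cycles s n k 1 = {0}"
proof -
  interpret S: tensor_coords "sym_tensor n" "{..n}" "ones_word n" by (rule tensor_coords_sym_tensor)
  let ?K = "kpm s k"
  have "x = 0" if x: "x \<in> cycles s n k 1" for x
  proof -
    obtain t where t: "x = sym_tensor n t" using x by (auto simp: cycles_def Cterm_1)
    have rec: "?K$0$c * t (Suc w) = ?K$1$c * t w" if "w < n" for w c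
      using x t sym_tensor_in_cycles_1[OF n] that by (simp add: d1_coords_def)
    \<comment> \<open>the two relations determine both \<open>t w\<close> and \<open>t (Suc w)\<close> by Cramer's rule\<close>
    have "t w * det ?K = 0 \<and> t (Suc w) * det ?K = 0" if "w < n" for w
      using rec[OF that, of 0] rec[OF that, of 1] by (simp add: det_mat2 algebra_simps) algebra
    then have vanish: "t w = 0 \<and> t (Suc w) = 0" if "w < n" for w
      using that det det_kpm[of s k] by simp
    have "t j = 0" if "j \<le> n" for j
    proof (cases "j < n")
      case False
      then have "j = Suc (n - 1)" using that n by simp
      then show ?thesis using vanish[of "n - 1"] n by simp
    qed (use vanish in simp)
    then show ?thesis using t by (simp add: S.eq_0_iff)
  qed
  then show ?thesis
    using subspace_cycles[of s n k 1] tensor.subspace_0 by blast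
qed

lemma cycles_1_rank_one:
  assumes n: "1 \<le> n" and K: "kpm s k = outer p q" and p: "p \<noteq> 0" and q: "q \<noteq> 0"
  shows "cycles s n k 1 = tspan {pure n p}"
proof
  interpret S: tensor_coords "sym_tensor n" "{..n}" "ones_word n" by (rule tensor_coords_sym_tensor)
  have in_cycles: "sym_tensor n t \<in> cycles s n k 1 \<longleftrightarrow> (\<forall>w<n. p$0 * t (Suc w) = p$1 * t w)" for t
    using q unfolding sym_tensor_in_cycles_1[OF n] K d1_coords_outer
    by (auto simp: vec2_eq_0_iff all_2_iff)
  show "cycles s n k 1 \<subseteq> tspan {pure n p}"
  proof
    fix x assume x: "x \<in> cycles s n k 1"
    then obtain t where t: "x = sym_tensor n t" by (auto simp: cycles_def Cterm_1)
    obtain c where "\<forall>j\<le>n. t j = c * pure_coords p n j"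
      using recurrence_solution[OF p] x t in_cycles by blast
    then have "x = tscale c (pure n p)"
      using t by (simp add: pure_eq_sym_tensor S.scale S.eq_iff)
    then show "x \<in> tspan {pure n p}"
      by (simp add: tensor.span_scale tensor.span_base)
  qed
  have "pure n p \<in> cycles s n k 1"
    unfolding pure_eq_sym_tensor in_cycles by (simp add: pure_coords_recurrence)
  then show "tspan {pure n p} \<subseteq> cycles s n k 1"
    by (simp add: tensor.span_minimal subspace_cycles)
qed

lemma exists_combination_eq_1:
  assumes "a \<noteq> 0 \<or> b \<noteq> 0"
  shows "\<exists>e0 e1. a * e1 - b * e0 = (1::complex)"
proof (cases "a = 0")
  case True
  then have "a * 0 - b * (- 1 / b) = 1" using assms by simp
  then show ?thesis by blast
next
  case False
  then have "a * (1 / a) - b * 0 = 1" by simp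
  then show ?thesis by blast
qed

lemma d2_coords_surj:
  assumes "K \<noteq> 0"
  shows "\<exists>u. d2_coords K u = indicator {v}"
proof (cases "K$1$0 \<noteq> 0 \<or> K$1$1 \<noteq> 0")
  case True
  then obtain e0 e1 where e: "K$1$0 * e1 - K$1$1 * e0 = 1"
    using exists_combination_eq_1 by blast
  define r where "r = K$0$1 * e0 - K$0$0 * e1"
  define c where "c w = (if w \<le> v then (- r) ^ (v - w) else 0)" for w
  \<comment> \<open>\<open>c\<close> solves \<open>c w + r c (w + 1) = \<delta>\<^sub>w\<^sub>v\<close>\<close>
  have "d2_coords K (\<lambda>(w, x). c w * (if x = 1 then e1 else e0)) w = c w + r * c (Suc w)" for w
    using e by (simp add: d2_coords_def r_def algebra_simps) algebra
  moreover have "c w + r * c (Suc w) = indicator {v} w" for w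
  proof (cases "w < v")
    case True
    then have "v - w = Suc (v - Suc w)" by simp
    then show ?thesis using True by (simp add: c_def)
  qed (auto simp: c_def)
  ultimately show ?thesis by (auto simp: fun_eq_iff)
next
  case False
  then have "- K$0$0 \<noteq> 0 \<or> - K$0$1 \<noteq> 0"
    using assms by (auto simp: mat2_eq_0_iff)
  then obtain e0 e1 where e: "- K$0$0 * e1 - - K$0$1 * e0 = 1"
    using exists_combination_eq_1 by blast
  have "d2_coords K (\<lambda>(w, x). of_bool (w = Suc v) * (if x = 1 then e1 else e0)) = indicator {v}"
    using False e by (auto simp: fun_eq_iff d2_coords_def algebra_simps)
  then show ?thesis by blast
qed

lemma boundaries_3:
  assumes n: "2 \<le> n" and k: "k \<noteq> 0"
  shows "boundaries s n k 3 = Cterm n 3"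
proof
  interpret S: tensor_coords "sym_tensor (n - 2)" "{..n - 2}" "ones_word (n - 2)"
    by (rule tensor_coords_sym_tensor)
  have Cterm_2': "Cterm n 2 = range (sym_butlast_tensor n)" using n by (simp add: Cterm_2)
  show "boundaries s n k 3 \<subseteq> Cterm n 3"
    using n by (auto simp: boundaries_def Cterm_2' Cterm_3 dmap_2_sym_butlast_tensor)
  have "sym_tensor (n - 2) (indicator {v}) \<in> boundaries s n k 3" for v
  proof -
    obtain u where "d2_coords (kpm s k) u = indicator {v}"
      using d2_coords_surj k kpm_eq_0_iff by blast
    then have "sym_tensor (n - 2) (indicator {v}) = dmap s n k 2 (sym_butlast_tensor n u)"
      using n by (simp add: dmap_2_sym_butlast_tensor)
    then show ?thesis
      by (auto simp: boundaries_def Cterm_2')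
  qed
  then show "Cterm n 3 \<subseteq> boundaries s n k 3"
    unfolding Cterm_3[OF n] S.range_eq_span
    by (intro tensor.span_minimal subspace_boundaries) auto
qed

lemma tdim_zero: "tdim {0} = 0"
  using tensor.dim_span_eq_card_independent[OF tensor.independent_empty] by (simp add: tensor.span_empty)

lemma dim_Cterm_1: "tdim (Cterm n 1) = n + 1"
  using tensor_coords.dim_range[OF tensor_coords_sym_tensor] by (simp add: Cterm_1)

lemma dim_Cterm_2: "1 \<le> n \<Longrightarrow> tdim (Cterm n 2) = 2 * n"
  using tensor_coords.dim_range[OF tensor_coords_sym_butlast_tensor, of n]
  by (simp add: Cterm_2 card_cartesian_product)

lemma dim_Cterm_3: "2 \<le> n \<Longrightarrow> tdim (Cterm n 3) = n - 1"
  using tensor_coords.dim_range[OF tensor_coords_sym_tensor] by (simp add: Cterm_3)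

lemma Cterm_finite_dim:
  assumes "1 \<le> n"
  obtains B where "finite B" "Cterm n i \<subseteq> tspan B"
proof -
  consider "i = 1" | "i = 2" | "i = 3" "2 \<le> n" | "Cterm n i = {0}"
    using Cterm_other by blast
  then show ?thesis
  proof cases
    case 1
    then show ?thesis
      using that tensor_coords.range_eq_span[OF tensor_coords_sym_tensor] tensor_coords.finite_I[OF tensor_coords_sym_tensor]
      by (metis Cterm_1 finite_imageI order_refl)
  next
    case 2
    then show ?thesis
      using that tensor_coords.range_eq_span[OF tensor_coords_sym_butlast_tensor[OF assms]]
        tensor_coords.finite_I[OF tensor_coords_sym_butlast_tensor[OF assms]]
      by (metis Cterm_2[OF assms] finite_imageI order_refl)
  next
    case 3
    then show ?thesis
      using that tensor_coords.range_eq_span[OF tensor_coords_sym_tensor] tensor_coords.finite_I[OF tensor_coords_sym_tensor]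
      by (metis Cterm_3 finite_imageI order_refl)
  next
    case 4
    then show ?thesis using that[of "{}"] by (simp add: tensor.span_empty)
  qed
qed

lemma dim_cycles_add_dim_boundaries:
  assumes "1 \<le> n"
  shows "tdim (cycles s n k i) + tdim (boundaries s n k (i + 1)) = tdim (Cterm n i)"
proof -
  obtain B where "finite B" "Cterm n i \<subseteq> tspan B" using Cterm_finite_dim[OF assms] .
  moreover have "vector_space_pair tscale tscale"
    by (simp add: vector_space_pair_def vector_space_tscale)
  ultimately show ?thesis
    using vector_space_pair.dim_kernel_add_dim_image[OF _ linear_dmap subspace_Cterm]
    by (simp add: cycles_def boundaries_def)
qed

lemma dim_cycles_2:
  assumes n: "1 \<le> n" and k: "k \<noteq> 0"
  shows "tdim (cycles s n k 2) = n + 1"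
proof (cases "n = 1")
  case True
  then have "cycles s n k 2 = Cterm n 2" by (auto simp: cycles_def dmap_other)
  then show ?thesis using True dim_Cterm_2 by simp
next
  case False
  then have n2: "2 \<le> n" using n by simp
  then show ?thesis
    using dim_cycles_add_dim_boundaries[OF n, of s k 2] boundaries_3[OF n2 k]
      dim_Cterm_2[OF n] dim_Cterm_3[OF n2]
    by simp
qed

lemma hdim_eq_dim_cycles_1:
  assumes n: "1 \<le> n" and k: "k \<noteq> 0"
  shows "hdim s n k i = (if i = 1 \<or> i = 2 then tdim (cycles s n k 1) else 0)"
proof -
  consider "i = 1" | "i = 2" | "i = 3" | "i \<noteq> 1 \<and> i \<noteq> 2 \<and> i \<noteq> 3" by blast
  then show ?thesis
  proof cases
    case 1
    have "Cterm n 0 = {0}" by (rule Cterm_other) auto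
    then have "boundaries s n k 1 = {0}" by (simp add: boundaries_def dmap_other)
    then show ?thesis using 1 by (simp add: hdim_eq tdim_zero)
  next
    case 2
    then show ?thesis
      using dim_cycles_add_dim_boundaries[OF n, of s k 1] dim_Cterm_1[of n] dim_cycles_2[OF n k]
      by (simp add: hdim_eq)
  next
    case 3
    have "cycles s n k 3 = Cterm n 3" by (auto simp: cycles_def dmap_other)
    moreover have "Cterm n 3 = boundaries s n k 3 \<or> Cterm n 3 = {0}"
      using boundaries_3[OF _ k] Cterm_other[of 3 n] by fastforce
    ultimately show ?thesis using 3 by (auto simp: hdim_eq tdim_zero)
  next
    case 4
    then have "cycles s n k i = {0}"
      using Cterm_other[of i n] by (auto simp: cycles_def dmap_other)
    then show ?thesis using 4 by (simp add: hdim_eq tdim_zero)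
  qed
qed

lemma hdim_det_ne_0:
  assumes "1 \<le> n" and "det k \<noteq> 0"
  shows "hdim s n k i = 0"
proof -
  have "k \<noteq> 0" using assms(2) det_mat2[of 0] by auto
  then show ?thesis
    using hdim_eq_dim_cycles_1[OF assms(1)] cycles_1_det_ne_0[OF assms] by (simp add: tdim_zero)
qed

lemma dim_cycles_1_rank_one:
  assumes "1 \<le> n" and "det k = 0" and "k \<noteq> 0"
  shows "tdim (cycles s n k 1) = 1"
proof -
  obtain p q where pq: "p \<noteq> 0" "q \<noteq> 0" "kpm s k = outer p q"
    using kpm_rank_one assms(2,3) .
  then have "tensor.independent {pure n p}"
    using pure_ne_0 by (simp add: tensor.independent_insert tensor.span_empty)
  then show ?thesis
    using cycles_1_rank_one[OF assms(1) pq(3,1,2)] by (simp add: tensor.dim_eq_card_independent)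
qed

lemma hdim_rank_one:
  assumes "1 \<le> n" and "det k = 0" and "k \<noteq> 0"
  shows "hdim s n k i = (if i = 1 \<or> i = 2 then 1 else 0)"
  using hdim_eq_dim_cycles_1[OF assms(1,3)] dim_cycles_1_rank_one[OF assms] by simp

section \<open>Regular homology points\<close>

(* The complex conjugate of the cofactor matrix, i.e. of the gradient of det; along it det has
   derivative sum |K_ij|^2. *)
definition conj_cofactor :: "mat2 \<Rightarrow> mat2" where
  "conj_cofactor K = (\<chi> i j. cnj (if i = 0 then if j = 0 then K$1$1 else - K$1$0
                                 else if j = 0 then - K$0$1 else K$0$0))"

lemma conj_cofactor_nth [simp]:
  "conj_cofactor K $0$0 = cnj (K$1$1)" "conj_cofactor K $0$1 = - cnj (K$1$0)"
  "conj_cofactor K $1$0 = - cnj (K$0$1)" "conj_cofactor K $1$1 = cnj (K$0$0)"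
  by (simp_all add: conj_cofactor_def)

lemma kpm_conj_cofactor: "kpm s (conj_cofactor K) = conj_cofactor (kpm s K)"
proof -
  have "transpose (conj_cofactor K) $i$j = conj_cofactor (transpose K) $i$j" for i j
    using exhaust_2_0_1[of i] exhaust_2_0_1[of j] by (auto simp: transpose_def)
  then show ?thesis by (simp add: kpm_def mat2_eqI)
qed

lemma sum_mult_cnj_ne_0:
  assumes "finite A" "a \<in> A" "f a \<noteq> 0"
  shows "(\<Sum>i\<in>A. f i * cnj (f i)) \<noteq> 0"
proof -
  have "(\<Sum>i\<in>A. f i * cnj (f i)) = of_real (\<Sum>i\<in>A. (cmod (f i))\<^sup>2)"
    by (simp only: of_real_sum complex_norm_square)
  moreover have "(\<Sum>i\<in>A. (cmod (f i))\<^sup>2) > 0"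
    using assms by (intro sum_pos2) auto
  ultimately show ?thesis by (metis of_real_eq_0_iff order_less_irrefl)
qed

lemma vec2_mult_cnj_ne_0: "(p::complex^2) \<noteq> 0 \<Longrightarrow> p$0 * cnj (p$0) + p$1 * cnj (p$1) \<noteq> 0"
  using sum_mult_cnj_ne_0[of UNIV _ "\<lambda>i. p$i"] by (auto simp: vec2_eq_0_iff sum_UNIV_2_eq)

lemma Qdot_nonzero_conj_cofactor:
  assumes "Q \<noteq> 0"
  shows "Qdot_nonzero Q (conj_cofactor Q)"
proof -
  let ?\<xi> = "conj_cofactor Q"
  have det_line: "(\<lambda>t. det (mline Q t ?\<xi>)) = (\<lambda>t. (Q$0$0 + t * ?\<xi>$0$0) * (Q$1$1 + t * ?\<xi>$1$1)
      - (Q$0$1 + t * ?\<xi>$0$1) * (Q$1$0 + t * ?\<xi>$1$0))"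
    by (simp add: det_mat2 mline_def fun_eq_iff)
  define D where "D = Q$0$0 * ?\<xi>$1$1 + ?\<xi>$0$0 * Q$1$1 - (Q$0$1 * ?\<xi>$1$0 + ?\<xi>$0$1 * Q$1$0)"
  have "((\<lambda>t. det (mline Q t ?\<xi>)) has_field_derivative D) (at 0)"
    unfolding det_line D_def by (auto intro!: derivative_eq_intros)
  moreover have "D = (\<Sum>p\<in>UNIV. Q $ fst p $ snd p * cnj (Q $ fst p $ snd p))"
    by (simp add: D_def UNIV_Times_UNIV[symmetric] sum.cartesian_product' sum_UNIV_2_eq
        del: UNIV_Times_UNIV)
  moreover obtain p where "Q $ fst p $ snd p \<noteq> 0"
    using assms by (auto simp: mat2_eq_0_iff)
  ultimately show ?thesis
    unfolding Qdot_nonzero_def using sum_mult_cnj_ne_0[of UNIV p] by auto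
qed

lemma d1_coords_conj_cofactor_outer:
  "b$0 * d1_coords (conj_cofactor (outer a b)) t (w, 1) - b$1 * d1_coords (conj_cofactor (outer a b)) t (w, 0)
    = - (b$0 * cnj (b$0) + b$1 * cnj (b$1)) * (cnj (a$1) * t (Suc w) + cnj (a$0) * t w)"
  by (simp add: d1_coords_def algebra_simps)

lemma pure_coords_conj_combination:
  assumes "w < m"
  shows "cnj (a$1) * pure_coords a m (Suc w) + cnj (a$0) * pure_coords a m w
    = (a$0 * cnj (a$0) + a$1 * cnj (a$1)) * pure_coords a (m - 1) w"
proof -
  obtain e where "m - w = Suc e" "m - Suc w = e" "m - 1 - w = e"
    using assms by (intro that[of "m - Suc w"]) auto
  then show ?thesis by (simp add: pure_coords_def algebra_simps)
qed

lemma d1_conj_cofactor_notin_boundaries: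
  assumes n: "1 \<le> n" and K: "kpm s Q = outer a b" and a: "a \<noteq> 0" and b: "b \<noteq> 0"
  shows "dmap s n (conj_cofactor Q) 1 (pure n a) \<notin> boundaries s n Q 2"
proof
  interpret S: tensor_coords "sym_butlast_tensor n" "{..n - 1} \<times> UNIV" "\<lambda>(j, c). ones_word (n - 1) j @ [c]"
    by (rule tensor_coords_sym_butlast_tensor[OF n])
  let ?L = "conj_cofactor (outer a b)"
  assume "dmap s n (conj_cofactor Q) 1 (pure n a) \<in> boundaries s n Q 2"
  then obtain t where
    "sym_butlast_tensor n (d1_coords ?L (pure_coords a n)) = sym_butlast_tensor n (d1_coords (outer a b) t)"
    using n by (auto simp: boundaries_def Cterm_1 pure_eq_sym_tensor dmap_1_sym_tensor kpm_conj_cofactor K)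
  then have eq: "d1_coords ?L (pure_coords a n) (w, x) = d1_coords (outer a b) t (w, x)" if "w < n" for w x
    using that by (auto simp: S.eq_iff)
  obtain w where w: "w \<le> n - 1" "pure_coords a (n - 1) w \<noteq> 0"
    using pure_coords_ne_0[OF a] by blast
  then have "w < n" using n by simp
  \<comment> \<open>the functional \<open>u \<mapsto> b\<^sub>0 u(w,1) - b\<^sub>1 u(w,0)\<close> kills the image of \<open>d\<^sub>1\<close> at \<open>Q\<close> but not this vector\<close>
  have "0 = b$0 * d1_coords (outer a b) t (w, 1) - b$1 * d1_coords (outer a b) t (w, 0)"
    by (simp add: d1_coords_outer algebra_simps)
  also have "\<dots> = b$0 * d1_coords ?L (pure_coords a n) (w, 1) - b$1 * d1_coords ?L (pure_coords a n) (w, 0)"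
    using eq[OF \<open>w < n\<close>] by simp
  also have "\<dots> = - (b$0 * cnj (b$0) + b$1 * cnj (b$1))
      * ((a$0 * cnj (a$0) + a$1 * cnj (a$1)) * pure_coords a (n - 1) w)"
    by (simp only: d1_coords_conj_cofactor_outer pure_coords_conj_combination[OF \<open>w < n\<close>])
  finally have "- (b$0 * cnj (b$0) + b$1 * cnj (b$1))
      * ((a$0 * cnj (a$0) + a$1 * cnj (a$1)) * pure_coords a (n - 1) w) = 0"
    by (rule sym)
  then show False
    using vec2_mult_cnj_ne_0[OF a] vec2_mult_cnj_ne_0[OF b] w(2)
    by (auto simp only: mult_eq_0_iff neg_equal_0_iff_equal)
qed

lemma dmap_1_cycle_in_cycles_2:
  assumes n: "1 \<le> n" and v: "v \<in> cycles s n k 1"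
  shows "dmap s n l 1 v \<in> cycles s n k 2"
proof -
  have "v \<in> Cterm n 1" "dmap s n k 1 v = 0" using v by (auto simp: cycles_def)
  then have "dmap s n k 2 (dmap s n l 1 v) = 0"
    using dmap_2_dmap_1_polar[of v n s k l] by (simp add: dmap_zero)
  moreover have "dmap s n l 1 v \<in> Cterm n 2"
    using n \<open>v \<in> Cterm n 1\<close> by (rule dmap_1_in_Cterm_2)
  ultimately show ?thesis by (simp add: cycles_def)
qed

lemma cycles_2_eq_span_insert:
  assumes n: "1 \<le> n" and k: "k \<noteq> 0" and c1: "tdim (cycles s n k 1) = 1"
    and g: "g \<in> cycles s n k 2" "g \<notin> boundaries s n k 2"
  shows "cycles s n k 2 = tspan (insert g (boundaries s n k 2))"
proof -
  obtain B where B: "finite B" "Cterm n 2 \<subseteq> tspan B" using Cterm_finite_dim[OF n] .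
  have cycles_B: "cycles s n k 2 \<subseteq> tspan B" using B(2) by (auto simp: cycles_def)
  have bdry: "boundaries s n k 2 \<subseteq> cycles s n k 2" by (rule boundaries_2_subset_cycles_2[OF n])
  have "tdim (boundaries s n k 2) = n"
    using dim_cycles_add_dim_boundaries[OF n, of s k 1] dim_Cterm_1[of n] c1 by simp
  moreover have "g \<notin> tspan (boundaries s n k 2)"
    using g(2) subspace_boundaries by (simp add: tensor.span_eq_iff[THEN iffD2])
  ultimately have "tdim (tspan (insert g (boundaries s n k 2))) = n + 1"
    using tensor.dim_insert_finite[OF B(1)] bdry cycles_B by simp
  moreover have "tspan (insert g (boundaries s n k 2)) \<subseteq> cycles s n k 2"
    using g(1) bdry by (intro tensor.span_minimal subspace_cycles) auto
  ultimately have "tspan (insert g (boundaries s n k 2)) = cycles s n k 2"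
    using dim_cycles_2[OF n k] by (intro tensor.subspace_eq_if_dim_eq[OF B(1) cycles_B tensor.subspace_span]) simp_all
  then show ?thesis by simp
qed

context
  fixes s :: bool and n :: nat and Q :: mat2 and a b :: "complex^2"
  assumes n: "1 \<le> n" and rank_one: "kpm s Q = outer a b" and a: "a \<noteq> 0" and b: "b \<noteq> 0"
begin

private lemma Q_ne_0: "Q \<noteq> 0"
  using rank_one a b kpm_eq_0_iff[of s Q] by (simp add: outer_eq_0_iff)

private lemma det_Q: "det Q = 0"
proof -
  have "det (outer a b) = 0" by (simp add: det_mat2 algebra_simps)
  then show ?thesis using rank_one det_kpm[of s Q] by simp
qed

lemma cycle_1_with_exact_derivative:
  assumes "x \<in> cycles s n Q 1" and "dmap s n (conj_cofactor Q) 1 x \<in> boundaries s n Q 2"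
  shows "x = 0"
proof -
  interpret d: Vector_Spaces.linear tscale tscale "dmap s n (conj_cofactor Q) 1" by (rule linear_dmap)
  obtain c where c: "x = tscale c (pure n a)"
    using assms(1) cycles_1_rank_one[OF n rank_one a b] by (auto simp: tensor.span_singleton)
  have "c = 0"
  proof (rule ccontr)
    assume "c \<noteq> 0"
    have "tscale (inverse c) (dmap s n (conj_cofactor Q) 1 x) \<in> boundaries s n Q 2"
      using assms(2) subspace_boundaries tensor.subspace_scale by blast
    then have "dmap s n (conj_cofactor Q) 1 (pure n a) \<in> boundaries s n Q 2"
      using \<open>c \<noteq> 0\<close> by (simp add: c d.scale tensor.scale_scale)
    then show False using d1_conj_cofactor_notin_boundaries[OF n rank_one a b] by blast
  qed
  then show ?thesis using c by simp
qed

lemma cycle_2_decomposition: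
  assumes "x \<in> cycles s n Q 2"
  shows "\<exists>y\<in>cycles s n Q 1. \<exists>w\<in>Cterm n 1. x = dmap s n (conj_cofactor Q) 1 y + dmap s n Q 1 w"
proof -
  interpret d: Vector_Spaces.linear tscale tscale "dmap s n (conj_cofactor Q) 1" by (rule linear_dmap)
  let ?v = "pure n a"
  have v: "?v \<in> cycles s n Q 1"
    using cycles_1_rank_one[OF n rank_one a b] tensor.span_base by blast
  have dim_1: "tdim (cycles s n Q 1) = 1"
    by (rule dim_cycles_1_rank_one[OF n det_Q Q_ne_0])
  have "x \<in> tspan (insert (dmap s n (conj_cofactor Q) 1 ?v) (boundaries s n Q 2))"
    using assms cycles_2_eq_span_insert[OF n Q_ne_0 dim_1 dmap_1_cycle_in_cycles_2[OF n v]
        d1_conj_cofactor_notin_boundaries[OF n rank_one a b]]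
    by simp
  then obtain c where "x - tscale c (dmap s n (conj_cofactor Q) 1 ?v) \<in> boundaries s n Q 2"
    using subspace_boundaries by (auto simp: tensor.span_insert tensor.span_eq_iff[THEN iffD2])
  then obtain w where w: "w \<in> Cterm n 1" "x - dmap s n (conj_cofactor Q) 1 (tscale c ?v) = dmap s n Q 1 w"
    by (auto simp: boundaries_def d.scale)
  moreover have "x = dmap s n (conj_cofactor Q) 1 (tscale c ?v) + dmap s n Q 1 w"
    using w(2) by (simp add: diff_eq_eq)
  moreover have "tscale c ?v \<in> cycles s n Q 1"
    using v subspace_cycles tensor.subspace_scale by blast
  ultimately show ?thesis by blast
qed

lemma induced_exact_rank_one: "induced_exact s n Q (conj_cofactor Q)"
  unfolding induced_exact_def ddot_eq_dmap
proof (intro allI ballI impI)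
  fix i x
  assume x: "x \<in> Cterm n i"
    and hyp: "dmap s n Q i x = 0 \<and> dmap s n (conj_cofactor Q) i x \<in> dmap s n Q i ` Cterm n i"
  have witness: "\<exists>y\<in>Cterm n (i - 1). \<exists>w\<in>Cterm n (i - 1). dmap s n Q (i - 1) y = 0 \<and>
      x = (\<lambda>l. dmap s n (conj_cofactor Q) (i - 1) y l + dmap s n Q (i - 1) w l)"
    if "y \<in> cycles s n Q (i - 1)" "w \<in> Cterm n (i - 1)"
      "x = dmap s n (conj_cofactor Q) (i - 1) y + dmap s n Q (i - 1) w" for y w
  proof -
    have "x = (\<lambda>l. dmap s n (conj_cofactor Q) (i - 1) y l + dmap s n Q (i - 1) w l)"
      using that(3) by (simp add: plus_fun_def)
    then show ?thesis using that(1,2) unfolding cycles_def by blast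
  qed
  have zero: "0 \<in> cycles s n Q j" for j
    by (simp add: cycles_def zero_in_Cterm dmap_zero)
  consider "i = 1" | "i = 2" | "i = 3" "2 \<le> n" | "Cterm n i = {0}"
    using Cterm_other by blast
  then show "\<exists>y\<in>Cterm n (i - 1). \<exists>w\<in>Cterm n (i - 1). dmap s n Q (i - 1) y = 0 \<and>
      x = (\<lambda>l. dmap s n (conj_cofactor Q) (i - 1) y l + dmap s n Q (i - 1) w l)"
  proof cases
    case 1
    have "x \<in> cycles s n Q 1" using x hyp 1 by (simp add: cycles_def)
    moreover have "dmap s n (conj_cofactor Q) 1 x \<in> boundaries s n Q 2"
      using hyp 1 by (simp add: boundaries_def)
    ultimately have "x = 0" by (rule cycle_1_with_exact_derivative)
    then show ?thesis
      using witness[OF zero zero_in_Cterm] by (simp add: dmap_zero)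
  next
    case 2
    then have "x \<in> cycles s n Q 2" using x hyp by (simp add: cycles_def)
    then obtain y w where "y \<in> cycles s n Q 1" "w \<in> Cterm n 1"
      "x = dmap s n (conj_cofactor Q) 1 y + dmap s n Q 1 w"
      using cycle_2_decomposition by blast
    then show ?thesis using witness[of y w] 2 by simp
  next
    case 3
    then have "x \<in> boundaries s n Q 3" using x boundaries_3[OF 3(2) Q_ne_0] by simp
    then obtain w where "w \<in> Cterm n 2" "x = dmap s n Q 2 w"
      by (auto simp: boundaries_def)
    then show ?thesis using witness[OF zero, of w] 3 by (simp add: dmap_zero)
  next
    case 4
    then have "x = 0" using x by simp
    then show ?thesis
      using witness[OF zero zero_in_Cterm] by (simp add: dmap_zero)
  qed
qed

end

lemma induced_exact_conj_cofactor:
  assumes "1 \<le> n" and "det Q = 0" and "Q \<noteq> 0"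
  shows "induced_exact s n Q (conj_cofactor Q)"
proof -
  obtain a b where "a \<noteq> 0" "b \<noteq> 0" "kpm s Q = outer a b"
    using kpm_rank_one assms(2,3) .
  then show ?thesis using induced_exact_rank_one assms(1) by blast
qed

lemma zariski_open_nonzero: "zariski_open (- {0})"
proof -
  let ?P = "range (\<lambda>(i, j) (k::mat2). k$i$j)"
  have "?P \<subseteq> polyfun" by (auto intro: pf_coord)
  moreover have "{k. \<forall>p\<in>?P. p k = 0} = {0}" by (auto simp: vec_eq_iff)
  ultimately show ?thesis
    unfolding zariski_open_def by blast
qed

lemma regular_homology_point_rank_one:
  assumes n: "1 \<le> n" and det: "det q = 0" and q: "q \<noteq> 0"
  shows "regular_homology_point s n q"
  unfolding regular_homology_point_def smooth_point_def
  using det Qdot_nonzero_conj_cofactor[OF q] induced_exact_conj_cofactor[OF assms]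
    zariski_open_nonzero q hdim_rank_one[OF n]
  by (intro conjI exI[of _ "- {0}"] exI[of _ "conj_cofactor q"]) auto

theorem mainTheorem7:
  fixes n :: nat and s :: bool
  assumes "n \<ge> 1"
  shows "(\<forall>k::mat2. det k \<noteq> 0 \<longrightarrow> (\<forall>i. hdim s n k i = 0)) \<and>
         (\<forall>q::mat2. det q = 0 \<and> q \<noteq> 0 \<longrightarrow>
            hdim s n q 1 = 1 \<and> hdim s n q 2 = 1 \<and>
            (\<forall>i. i \<noteq> 1 \<and> i \<noteq> 2 \<longrightarrow> hdim s n q i = 0) \<and>
            regular_homology_point s n q)"
  using hdim_det_ne_0[OF assms] hdim_rank_one[OF assms] regular_homology_point_rank_one[OF assms]
  by auto

end
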